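(* For a graph $G=(V,E)$ and $\tau\ge1$, let $Q_{\mathrm{LP\text{-}Del\text{-}N}}(G,\tau)$ be the optimal value of the linear program $$\max\ -\sum_{v\in V}x_v\quad\text{s.t.}\quad y_e\ge1-x_{v'}-x_{v''}\ \ \forall e=(v',v'')\in E,\qquad \sum_{e\in E(v)}y_e\le\tau\ \ \forall v\in V,\qquad x_v,y_e\in[0,1].$$ Then: (1) for fixed $G$, $Q_{\mathrm{LP\text{-}Del\text{-}N}}(G,\tau)$ is non-decreasing in $\tau$ and equals $0$ for $\tau\ge\deg(G)$; (2) for any node-neighboring graphs $G,G'$, $|Q_{\mathrm{LP\text{-}Del\text{-}N}}(G,\tau)-Q_{\mathrm{LP\text{-}Del\text{-}N}}(G',\tau)|\le1$; (3) for node-neighboring $G,G'$ with $G\subseteq G'$, $Q_{\mathrm{LP\text{-}Del\text{-}N}}(G,\tau)\ge Q_{\mathrm{LP\text{-}Del\text{-}N}}(G',\tau)$.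
   Context: Graphs are finite, simple, undirected; $E(v)$ is the set of edges incident to $v$ and $\deg(G)$ is the maximum degree. $G\subseteq G'$ means $G$ is obtained from $G'$ by deleting a set of nodes with all incident edges; $G,G'$ are node-neighboring if one is obtained from the other by deleting a single node with its incident edges. *)

theory Defs
  imports Complex_Main
begin

type_synonym 'a graph = "'a set \<times> 'a set set"

definition verts :: "'a graph \<Rightarrow> 'a set" where "verts G = fst G"
definition edges :: "'a graph \<Rightarrow> 'a set set" where "edges G = snd G"

definition wf_graph :: "'a graph \<Rightarrow> bool" where
  "wf_graph G \<longleftrightarrow> finite (verts G) \<and>
     (\<forall>e\<in>edges G. \<exists>u v. e = {u, v} \<and> u \<noteq> v \<and> u \<in> verts G \<and> v \<in> verts G)"

definition inc_edges :: "'a graph \<Rightarrow> 'a \<Rightarrow> 'a set set" where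
  "inc_edges G v = {e \<in> edges G. v \<in> e}"

text \<open>Maximum degree (0 for the empty graph).\<close>
definition max_deg :: "'a graph \<Rightarrow> nat" where
  "max_deg G = Max (insert 0 ((\<lambda>v. card (inc_edges G v)) ` verts G))"

definition del_node :: "'a graph \<Rightarrow> 'a \<Rightarrow> 'a graph" where
  "del_node G v = (verts G - {v}, {e \<in> edges G. v \<notin> e})"

definition node_neighboring :: "'a graph \<Rightarrow> 'a graph \<Rightarrow> bool" where
  "node_neighboring G G' \<longleftrightarrow>
     (\<exists>v\<in>verts G'. G = del_node G' v) \<or> (\<exists>v\<in>verts G. G' = del_node G v)"

definition lp_feasible :: "'a graph \<Rightarrow> real \<Rightarrow> ('a \<Rightarrow> real) \<Rightarrow> ('a set \<Rightarrow> real) \<Rightarrow> bool" where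
  "lp_feasible G \<tau> x y \<longleftrightarrow>
     (\<forall>u\<in>verts G. \<forall>w\<in>verts G. {u, w} \<in> edges G \<longrightarrow> y {u, w} \<ge> 1 - x u - x w) \<and>
     (\<forall>v\<in>verts G. (\<Sum>e\<in>inc_edges G v. y e) \<le> \<tau>) \<and>
     (\<forall>v\<in>verts G. 0 \<le> x v \<and> x v \<le> 1) \<and>
     (\<forall>e\<in>edges G. 0 \<le> y e \<and> y e \<le> 1)"

definition Q_LP_Del_N :: "'a graph \<Rightarrow> real \<Rightarrow> real" where
  "Q_LP_Del_N G \<tau> = Sup {- (\<Sum>v\<in>verts G. x v) | x y. lp_feasible G \<tau> x y}"

end

theory Submission
  imports Defs
begin

text \<open>Every claim compares optimal values through a map between feasible points.
  A feasible point stays feasible when \<tau> grows, and when a node is deleted (dropping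
  its x-coordinate can only raise the objective). Conversely, a feasible point of
  G - v extends to G by x v = 1 and y e = 0 on the edges at v, which costs exactly 1.
  For \<tau> \<ge> deg(G) the point x = 0, y = 1 is feasible and attains the upper bound 0.\<close>

lemma finite_edges: "wf_graph G \<Longrightarrow> finite (edges G)"
  unfolding wf_graph_def by (rule finite_subset[of _ "Pow (verts G)"]) auto

lemma card_inc_edges_le_max_deg:
  assumes "finite (verts G)" "v \<in> verts G"
  shows "card (inc_edges G v) \<le> max_deg G"
  unfolding max_deg_def using assms by (intro Max_ge) auto

lemma verts_del_node [simp]: "verts (del_node G v) = verts G - {v}"
  and edges_del_node [simp]: "edges (del_node G v) = {e \<in> edges G. v \<notin> e}"
  unfolding del_node_def verts_def edges_def by simp_all

lemma inc_edges_del_node: "inc_edges (del_node G v) u = {e \<in> inc_edges G u. v \<notin> e}"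
  unfolding inc_edges_def by auto

lemma lp_feasible_all_ones_zero: "0 \<le> \<tau> \<Longrightarrow> lp_feasible G \<tau> (\<lambda>_. 1) (\<lambda>_. 0)"
  unfolding lp_feasible_def by auto

lemma lp_feasible_sum_nonneg: "lp_feasible G \<tau> x y \<Longrightarrow> 0 \<le> (\<Sum>v\<in>verts G. x v)"
  unfolding lp_feasible_def by (auto intro: sum_nonneg)

lemma lp_values_nonempty: "0 \<le> \<tau> \<Longrightarrow> {- (\<Sum>v\<in>verts G. x v) | x y. lp_feasible G \<tau> x y} \<noteq> {}"
  using lp_feasible_all_ones_zero by blast

lemma bdd_above_lp_values: "bdd_above {- (\<Sum>v\<in>verts G. x v) | x y. lp_feasible G \<tau> x y}"
  by (rule bdd_aboveI[of _ 0]) (auto dest: lp_feasible_sum_nonneg)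

lemma Q_LP_Del_N_ge_feasible:
  "lp_feasible G \<tau> x y \<Longrightarrow> - (\<Sum>v\<in>verts G. x v) \<le> Q_LP_Del_N G \<tau>"
  unfolding Q_LP_Del_N_def by (rule cSup_upper[OF _ bdd_above_lp_values]) blast

(* 0 \<le> \<tau> makes the feasible set nonempty; Sup {} would be an unspecified real. *)
lemma Q_LP_Del_N_le_plus:
  assumes "0 \<le> \<tau>"
    and simulate: "\<And>x y. lp_feasible G \<tau> x y \<Longrightarrow>
      \<exists>x' y'. lp_feasible G' \<tau>' x' y' \<and> (\<Sum>v\<in>verts G'. x' v) \<le> (\<Sum>v\<in>verts G. x v) + c"
  shows "Q_LP_Del_N G \<tau> \<le> Q_LP_Del_N G' \<tau>' + c"
  unfolding Q_LP_Del_N_def[of G]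
proof (rule cSup_least[OF lp_values_nonempty[OF \<open>0 \<le> \<tau>\<close>]])
  fix s assume "s \<in> {- (\<Sum>v\<in>verts G. x v) | x y. lp_feasible G \<tau> x y}"
  then obtain x y where s: "s = - (\<Sum>v\<in>verts G. x v)" and "lp_feasible G \<tau> x y"
    by blast
  then obtain x' y' where "lp_feasible G' \<tau>' x' y'"
    and "(\<Sum>v\<in>verts G'. x' v) \<le> (\<Sum>v\<in>verts G. x v) + c"
    using simulate by blast
  with Q_LP_Del_N_ge_feasible[of G' \<tau>' x' y'] show "s \<le> Q_LP_Del_N G' \<tau>' + c"
    unfolding s by linarith
qed

lemma Q_LP_Del_N_le_0: "0 \<le> \<tau> \<Longrightarrow> Q_LP_Del_N G \<tau> \<le> 0"
  unfolding Q_LP_Del_N_def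
  by (rule cSup_least[OF lp_values_nonempty]) (auto dest: lp_feasible_sum_nonneg)

lemma Q_LP_Del_N_mono:
  assumes "0 \<le> \<tau>1" "\<tau>1 \<le> \<tau>2"
  shows "Q_LP_Del_N G \<tau>1 \<le> Q_LP_Del_N G \<tau>2"
proof -
  have "lp_feasible G \<tau>2 x y" if "lp_feasible G \<tau>1 x y" for x y
    using that assms(2) unfolding lp_feasible_def by force
  then show ?thesis
    using Q_LP_Del_N_le_plus[of \<tau>1 G G \<tau>2 0] assms(1) by fastforce
qed

lemma Q_LP_Del_N_eq_0:
  assumes "wf_graph G" "real (max_deg G) \<le> \<tau>"
  shows "Q_LP_Del_N G \<tau> = 0"
proof -
  have "lp_feasible G \<tau> (\<lambda>_. 0) (\<lambda>_. 1)"
    unfolding lp_feasible_def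
  proof (intro conjI ballI)
    fix v assume "v \<in> verts G"
    with assms(1) have "card (inc_edges G v) \<le> max_deg G"
      by (intro card_inc_edges_le_max_deg) (simp_all add: wf_graph_def)
    with assms(2) show "(\<Sum>e\<in>inc_edges G v. 1) \<le> \<tau>" by simp
  qed auto
  from Q_LP_Del_N_ge_feasible[OF this] have "0 \<le> Q_LP_Del_N G \<tau>" by simp
  moreover have "0 \<le> \<tau>" using assms(2) of_nat_0_le_iff order_trans by blast
  ultimately show ?thesis using Q_LP_Del_N_le_0[of \<tau> G] by linarith
qed

lemma lp_feasible_del_node:
  assumes "finite (edges G)" "lp_feasible G \<tau> x y"
  shows "lp_feasible (del_node G v) \<tau> x y"
  unfolding lp_feasible_def
proof (intro conjI ballI)
  fix u assume u: "u \<in> verts (del_node G v)"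
  have "(\<Sum>e\<in>inc_edges (del_node G v) u. y e) \<le> (\<Sum>e\<in>inc_edges G u. y e)"
    using assms unfolding inc_edges_del_node
    by (intro sum_mono2) (auto simp: inc_edges_def lp_feasible_def)
  also have "\<dots> \<le> \<tau>" using assms(2) u unfolding lp_feasible_def by auto
  finally show "(\<Sum>e\<in>inc_edges (del_node G v) u. y e) \<le> \<tau>" .
qed (use assms(2) in \<open>auto simp: lp_feasible_def\<close>)

lemma lp_feasible_extend_del_node:
  assumes "finite (edges G)" "0 \<le> \<tau>" and feas: "lp_feasible (del_node G v) \<tau> x y"
  shows "lp_feasible G \<tau> (x(v := 1)) (\<lambda>e. if v \<in> e then 0 else y e)"
    (is "lp_feasible G \<tau> ?x ?y")
proof -
  have x_range: "0 \<le> ?x u \<and> ?x u \<le> 1" if "u \<in> verts G" for u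
    using feas that unfolding lp_feasible_def by auto
  have y_range: "0 \<le> ?y e \<and> ?y e \<le> 1" if "e \<in> edges G" for e
    using feas that unfolding lp_feasible_def by auto
  have edge: "1 - ?x a - ?x b \<le> ?y {a, b}"
    if "a \<in> verts G" "b \<in> verts G" "{a, b} \<in> edges G" for a b
  proof (cases "v \<in> {a, b}")
    case True
    then show ?thesis using x_range[OF that(1)] x_range[OF that(2)] by auto
  next
    case False
    then show ?thesis using feas that unfolding lp_feasible_def by auto
  qed
  have degree: "(\<Sum>e\<in>inc_edges G u. ?y e) \<le> \<tau>" if "u \<in> verts G" for u
  proof (cases "u = v")
    case True
    then show ?thesis using \<open>0 \<le> \<tau>\<close> by (simp add: inc_edges_def)
  next
    case False
    have "(\<Sum>e\<in>inc_edges G u. ?y e) = (\<Sum>e\<in>inc_edges (del_node G v) u. y e)"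
      unfolding inc_edges_del_node using assms(1)
      by (intro sum.mono_neutral_cong_right) (auto simp: inc_edges_def)
    also have "\<dots> \<le> \<tau>" using feas that False unfolding lp_feasible_def by auto
    finally show ?thesis .
  qed
  show ?thesis
    unfolding lp_feasible_def using x_range y_range edge degree by blast
qed

lemma Q_LP_Del_N_le_del_node:
  assumes "wf_graph G" "v \<in> verts G" "0 \<le> \<tau>"
  shows "Q_LP_Del_N G \<tau> \<le> Q_LP_Del_N (del_node G v) \<tau>"
proof -
  have "\<exists>x' y'. lp_feasible (del_node G v) \<tau> x' y' \<and>
      (\<Sum>u\<in>verts (del_node G v). x' u) \<le> (\<Sum>u\<in>verts G. x u) + 0"
    if feas: "lp_feasible G \<tau> x y" for x y
  proof (intro exI conjI)
    show "lp_feasible (del_node G v) \<tau> x y"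
      using lp_feasible_del_node[OF finite_edges[OF assms(1)] feas] .
    show "(\<Sum>u\<in>verts (del_node G v). x u) \<le> (\<Sum>u\<in>verts G. x u) + 0"
      using assms(1) feas unfolding wf_graph_def lp_feasible_def by (auto intro: sum_mono2)
  qed
  from Q_LP_Del_N_le_plus[OF assms(3) this] show ?thesis by simp
qed

lemma Q_LP_Del_N_del_node_le:
  assumes "wf_graph G" "v \<in> verts G" "0 \<le> \<tau>"
  shows "Q_LP_Del_N (del_node G v) \<tau> \<le> Q_LP_Del_N G \<tau> + 1"
proof -
  have "\<exists>x' y'. lp_feasible G \<tau> x' y' \<and>
      (\<Sum>u\<in>verts G. x' u) \<le> (\<Sum>u\<in>verts (del_node G v). x u) + 1"
    if feas: "lp_feasible (del_node G v) \<tau> x y" for x y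
  proof (intro exI conjI)
    show "lp_feasible G \<tau> (x(v := 1)) (\<lambda>e. if v \<in> e then 0 else y e)"
      using lp_feasible_extend_del_node[OF finite_edges[OF assms(1)] assms(3) feas] .
    have "finite (verts G)" using assms(1) by (simp add: wf_graph_def)
    then have "(\<Sum>u\<in>verts G. (x(v := 1)) u) = 1 + (\<Sum>u\<in>verts G - {v}. (x(v := 1)) u)"
      using assms(2) by (simp add: sum.remove)
    also have "\<dots> = 1 + (\<Sum>u\<in>verts (del_node G v). x u)"
      by (auto intro: sum.cong)
    finally show "(\<Sum>u\<in>verts G. (x(v := 1)) u) \<le> (\<Sum>u\<in>verts (del_node G v). x u) + 1"
      by simp
  qed
  from Q_LP_Del_N_le_plus[OF assms(3) this] show ?thesis .
qed

lemma Q_LP_Del_N_del_node_dist: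
  assumes "wf_graph G" "v \<in> verts G" "0 \<le> \<tau>"
  shows "\<bar>Q_LP_Del_N (del_node G v) \<tau> - Q_LP_Del_N G \<tau>\<bar> \<le> 1"
  using Q_LP_Del_N_le_del_node[OF assms] Q_LP_Del_N_del_node_le[OF assms] by linarith

theorem mainTheorem6:
  shows
   "(\<forall>(G::'a graph) \<tau>1 \<tau>2. wf_graph G \<and> 1 \<le> \<tau>1 \<and> \<tau>1 \<le> \<tau>2 \<longrightarrow>
        Q_LP_Del_N G \<tau>1 \<le> Q_LP_Del_N G \<tau>2)
  \<and> (\<forall>(G::'a graph) \<tau>. wf_graph G \<and> 1 \<le> \<tau> \<and> real (max_deg G) \<le> \<tau> \<longrightarrow>
        Q_LP_Del_N G \<tau> = 0)
  \<and> (\<forall>(G::'a graph) G' \<tau>. wf_graph G \<and> wf_graph G' \<and> node_neighboring G G' \<and> 1 \<le> \<tau> \<longrightarrow>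
        \<bar>Q_LP_Del_N G \<tau> - Q_LP_Del_N G' \<tau>\<bar> \<le> 1)
  \<and> (\<forall>(G::'a graph) G' \<tau>. wf_graph G \<and> wf_graph G' \<and> 1 \<le> \<tau> \<and>
        (\<exists>v\<in>verts G'. G = del_node G' v) \<longrightarrow>
        Q_LP_Del_N G \<tau> \<ge> Q_LP_Del_N G' \<tau>)"
proof (intro conjI allI impI)
  fix G :: "'a graph" and \<tau>1 \<tau>2 :: real
  assume "wf_graph G \<and> 1 \<le> \<tau>1 \<and> \<tau>1 \<le> \<tau>2"
  then show "Q_LP_Del_N G \<tau>1 \<le> Q_LP_Del_N G \<tau>2" by (simp add: Q_LP_Del_N_mono)
next
  fix G :: "'a graph" and \<tau> :: real
  assume "wf_graph G \<and> 1 \<le> \<tau> \<and> real (max_deg G) \<le> \<tau>"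
  then show "Q_LP_Del_N G \<tau> = 0" by (simp add: Q_LP_Del_N_eq_0)
next
  fix G G' :: "'a graph" and \<tau> :: real
  assume asm: "wf_graph G \<and> wf_graph G' \<and> node_neighboring G G' \<and> 1 \<le> \<tau>"
  then have "0 \<le> \<tau>" by simp
  with asm show "\<bar>Q_LP_Del_N G \<tau> - Q_LP_Del_N G' \<tau>\<bar> \<le> 1"
    unfolding node_neighboring_def by (metis Q_LP_Del_N_del_node_dist abs_minus_commute)
next
  fix G G' :: "'a graph" and \<tau> :: real
  assume asm: "wf_graph G \<and> wf_graph G' \<and> 1 \<le> \<tau> \<and> (\<exists>v\<in>verts G'. G = del_node G' v)"
  then obtain v where "v \<in> verts G'" "G = del_node G' v" by blast
  with asm show "Q_LP_Del_N G' \<tau> \<le> Q_LP_Del_N G \<tau>"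
    using Q_LP_Del_N_le_del_node[of G' v \<tau>] by simp
qed

end
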